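(* Let $M$ be a finitely generated monoid and let $G$ be a finite group. Then the direct product $M\times G$ is quasi-isometric to $M$.
   Context: For a monoid $S$ generated by a finite set $A$, $d_A(x,y)=\inf\{|w|:w\in A^*,\ xw=y\}$ ($A^*$ the free monoid on $A$, $\inf\emptyset=\infty$). A map $f:(S,d_A)\to(T,d_B)$ is a quasi-isometry if there are $1\le\lambda<\infty$, $0<\epsilon<\infty$, $0\le\mu<\infty$ with $\frac1\lambda d_A(x,y)-\epsilon\le d_B(f(x),f(y))\le\lambda d_A(x,y)+\epsilon$ for all $x,y$, and for each $t\in T$ some $x\in S$ with $\max(d_B(t,f(x)),d_B(f(x),t))\le\mu$. Finitely generated monoids $S,T$ are quasi-isometric if $(S,d_A)$ and $(T,d_B)$ are quasi-isometric for some finite generating sets $A,B$. *)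

theory Defs
  imports "HOL-Algebra.Group" "HOL-Library.Extended_Real"
begin

definition word_eval :: "('a, 'm) monoid_scheme \<Rightarrow> 'a list \<Rightarrow> 'a" where
  "word_eval S w = foldr (\<lambda>a b. a \<otimes>\<^bsub>S\<^esub> b) w \<one>\<^bsub>S\<^esub>"

definition fin_gen_set :: "('a, 'm) monoid_scheme \<Rightarrow> 'a set \<Rightarrow> bool" where
  "fin_gen_set S A \<longleftrightarrow> finite A \<and> A \<subseteq> carrier S \<and>
     carrier S = {word_eval S w | w. w \<in> lists A}"

definition fin_gen_monoid :: "('a, 'm) monoid_scheme \<Rightarrow> bool" where
  "fin_gen_monoid S \<longleftrightarrow> monoid S \<and> (\<exists>A. fin_gen_set S A)"

text \<open>Directed word distance d_A(x,y) = inf{|w| : w in A*, x w = y}, with inf {} = \<infinity>.\<close>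
definition word_dist :: "('a, 'm) monoid_scheme \<Rightarrow> 'a set \<Rightarrow> 'a \<Rightarrow> 'a \<Rightarrow> ereal" where
  "word_dist S A x y = Inf {ereal (real (length w)) | w. w \<in> lists A \<and> x \<otimes>\<^bsub>S\<^esub> word_eval S w = y}"

definition quasi_isometry ::
  "('a, 'm) monoid_scheme \<Rightarrow> 'a set \<Rightarrow> ('b, 'n) monoid_scheme \<Rightarrow> 'b set \<Rightarrow> ('a \<Rightarrow> 'b) \<Rightarrow> bool" where
  "quasi_isometry S A T B f \<longleftrightarrow> f \<in> carrier S \<rightarrow> carrier T \<and>
     (\<exists>lam eps mu :: real. 1 \<le> lam \<and> 0 < eps \<and> 0 \<le> mu \<and>
        (\<forall>x\<in>carrier S. \<forall>y\<in>carrier S.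
           ereal (1 / lam) * word_dist S A x y - ereal eps \<le> word_dist T B (f x) (f y) \<and>
           word_dist T B (f x) (f y) \<le> ereal lam * word_dist S A x y + ereal eps) \<and>
        (\<forall>t\<in>carrier T. \<exists>x\<in>carrier S.
           max (word_dist T B t (f x)) (word_dist T B (f x) t) \<le> ereal mu))"

definition quasi_isometric :: "('a, 'm) monoid_scheme \<Rightarrow> ('b, 'n) monoid_scheme \<Rightarrow> bool" where
  "quasi_isometric S T \<longleftrightarrow>
     (\<exists>A B f. fin_gen_set S A \<and> fin_gen_set T B \<and> quasi_isometry S A T B f)"

end

theory Submission
  imports Defs
begin

text \<open>
  Generate \<open>M \<times> G\<close> by \<open>A \<times> {1}\<close> together with \<open>{1} \<times> G\<close>. Projecting a word of the product to
  its first coordinates (and dropping the letters that become trivial) does not lengthen it, so the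
  projection \<open>(m, g) \<mapsto> m\<close> is 1-Lipschitz. Conversely a word \<open>w\<close> over \<open>A\<close> with \<open>m w = m'\<close> lifts
  to a word of length \<open>|w| + 1\<close> from \<open>(m, g)\<close> to \<open>(m', g')\<close>: append the single letter
  \<open>(1, g\<^sup>-\<^sup>1 g')\<close>, a generator since all of \<open>{1} \<times> G\<close> is; finiteness of \<open>G\<close> keeps
  this generating set finite. Hence the surjective projection is a quasi-isometry with constants \<open>\<lambda> = 1\<close>,
  \<open>\<epsilon> = 1\<close>, \<open>\<mu> = 0\<close>.
\<close>

lemma word_eval_Nil [simp]: "word_eval S [] = \<one>\<^bsub>S\<^esub>"
  by (simp add: word_eval_def)

lemma word_eval_Cons [simp]: "word_eval S (a # w) = a \<otimes>\<^bsub>S\<^esub> word_eval S w"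
  by (simp add: word_eval_def)

lemma (in monoid) word_eval_closed: "set w \<subseteq> carrier G \<Longrightarrow> word_eval G w \<in> carrier G"
  by (induction w) auto

lemma (in monoid) word_eval_append:
  "set u \<subseteq> carrier G \<Longrightarrow> set v \<subseteq> carrier G \<Longrightarrow>
   word_eval G (u @ v) = word_eval G u \<otimes> word_eval G v"
  by (induction u) (auto simp: m_assoc word_eval_closed)

lemma (in monoid) word_eval_filter_neq_one:
  "set w \<subseteq> carrier G \<Longrightarrow> word_eval G (filter (\<lambda>a. a \<noteq> \<one>) w) = word_eval G w"
  by (induction w) (auto simp: word_eval_closed)

lemma word_eval_DirProd:
  "word_eval (M \<times>\<times> H) w = (word_eval M (map fst w), word_eval H (map snd w))"
  by (induction w) (auto simp: mult_DirProd')

lemma word_dist_le_length: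
  "w \<in> lists A \<Longrightarrow> x \<otimes>\<^bsub>S\<^esub> word_eval S w = y \<Longrightarrow> word_dist S A x y \<le> ereal (real (length w))"
  unfolding word_dist_def by (rule Inf_lower) blast

lemma word_dist_self_le_zero: "monoid S \<Longrightarrow> x \<in> carrier S \<Longrightarrow> word_dist S A x x \<le> 0"
  using word_dist_le_length[of "[]" A S x x] by (simp add: zero_ereal_def)

lemma le_word_dist_plusI:
  assumes "\<And>w. w \<in> lists A \<Longrightarrow> x \<otimes>\<^bsub>S\<^esub> word_eval S w = y \<Longrightarrow> d \<le> ereal (real (length w)) + ereal c"
  shows "d \<le> word_dist S A x y + ereal c"
proof -
  have "d - ereal c \<le> word_dist S A x y"
    unfolding word_dist_def
  proof (rule Inf_greatest)
    fix z assume "z \<in> {ereal (real (length w)) | w. w \<in> lists A \<and> x \<otimes>\<^bsub>S\<^esub> word_eval S w = y}"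
    then obtain w where "w \<in> lists A" "x \<otimes>\<^bsub>S\<^esub> word_eval S w = y" "z = ereal (real (length w))"
      by blast
    with assms show "d - ereal c \<le> z" by (simp add: ereal_minus_le_iff)
  qed
  then show ?thesis by (simp add: ereal_minus_le_iff add.commute)
qed

lemma quasi_isometry_if_onto_and_distance_bounds:
  assumes "monoid T"
    and onto: "f ` carrier S = carrier T"
    and contract: "\<And>x y. x \<in> carrier S \<Longrightarrow> y \<in> carrier S \<Longrightarrow>
      word_dist T B (f x) (f y) \<le> word_dist S A x y"
    and expand: "\<And>x y. x \<in> carrier S \<Longrightarrow> y \<in> carrier S \<Longrightarrow>
      word_dist S A x y \<le> word_dist T B (f x) (f y) + ereal c"
    and "0 < c"
  shows "quasi_isometry S A T B f"
proof -
  have bounds: "ereal (1 / 1) * word_dist S A x y - ereal c \<le> word_dist T B (f x) (f y) \<and>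
      word_dist T B (f x) (f y) \<le> ereal 1 * word_dist S A x y + ereal c"
    if xy: "x \<in> carrier S" "y \<in> carrier S" for x y
  proof
    show "ereal (1 / 1) * word_dist S A x y - ereal c \<le> word_dist T B (f x) (f y)"
      using expand[OF xy] by (simp add: ereal_minus_le)
    have "word_dist S A x y \<le> word_dist S A x y + ereal c"
      using \<open>0 < c\<close> by (cases "word_dist S A x y") auto
    then show "word_dist T B (f x) (f y) \<le> ereal 1 * word_dist S A x y + ereal c"
      using contract[OF xy] by simp
  qed
  have cover: "\<exists>x\<in>carrier S. max (word_dist T B t (f x)) (word_dist T B (f x) t) \<le> ereal 0"
    if "t \<in> carrier T" for t
  proof -
    from \<open>t \<in> carrier T\<close> obtain x where "x \<in> carrier S" "f x = t"
      unfolding onto[symmetric] by auto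
    then show ?thesis
      using word_dist_self_le_zero[OF \<open>monoid T\<close> \<open>t \<in> carrier T\<close>]
      by (auto simp: zero_ereal_def)
  qed
  have maps: "f \<in> carrier S \<rightarrow> carrier T"
    by (simp add: image_subset_iff_funcset[symmetric] onto)
  show ?thesis
    unfolding quasi_isometry_def
    by (rule conjI[OF maps], rule exI[of _ "1::real"], rule exI[of _ c], rule exI[of _ "0::real"])
       (use bounds cover \<open>0 < c\<close> in auto)
qed

definition DirProd_gens ::
  "('a, 'm) monoid_scheme \<Rightarrow> 'a set \<Rightarrow> ('b, 'n) monoid_scheme \<Rightarrow> ('a \<times> 'b) set" where
  "DirProd_gens M A H = (\<lambda>a. (a, \<one>\<^bsub>H\<^esub>)) ` A \<union> (\<lambda>h. (\<one>\<^bsub>M\<^esub>, h)) ` carrier H"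

definition DirProd_lift ::
  "('a, 'm) monoid_scheme \<Rightarrow> ('b, 'n) monoid_scheme \<Rightarrow> 'a list \<Rightarrow> 'b \<Rightarrow> ('a \<times> 'b) list" where
  "DirProd_lift M H w h = map (\<lambda>a. (a, \<one>\<^bsub>H\<^esub>)) w @ [(\<one>\<^bsub>M\<^esub>, h)]"

lemma DirProd_lift_in_gens:
  "w \<in> lists A \<Longrightarrow> h \<in> carrier H \<Longrightarrow> DirProd_lift M H w h \<in> lists (DirProd_gens M A H)"
  by (auto simp: DirProd_lift_def DirProd_gens_def)

lemma word_eval_DirProd_lift:
  assumes "monoid M" "monoid H" "set w \<subseteq> carrier M" "h \<in> carrier H"
  shows "word_eval (M \<times>\<times> H) (DirProd_lift M H w h) = (word_eval M w, h)"
proof -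
  interpret M: monoid M by fact
  interpret H: monoid H by fact
  have "map fst (DirProd_lift M H w h) = w @ [\<one>\<^bsub>M\<^esub>]"
    and "map snd (DirProd_lift M H w h) = map (\<lambda>a. \<one>\<^bsub>H\<^esub>) w @ [h]"
    by (simp_all add: DirProd_lift_def comp_def)
  moreover have "word_eval H (map (\<lambda>a. \<one>\<^bsub>H\<^esub>) w) = \<one>\<^bsub>H\<^esub>"
    by (induction w) auto
  moreover have "set (map (\<lambda>a. \<one>\<^bsub>H\<^esub>) w) \<subseteq> carrier H"
    by auto
  ultimately show ?thesis
    using assms(3,4)
    by (simp add: word_eval_DirProd M.word_eval_append H.word_eval_append M.word_eval_closed)
qed

lemma fin_gen_set_DirProd:
  assumes "monoid M" "monoid H" "fin_gen_set M A" "finite (carrier H)"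
  shows "fin_gen_set (M \<times>\<times> H) (DirProd_gens M A H)"
proof -
  interpret P: monoid "M \<times>\<times> H" using assms(1,2) by (rule DirProd_monoid)
  have "finite A" and A_closed: "A \<subseteq> carrier M"
    and M_gen: "carrier M = {word_eval M w | w. w \<in> lists A}"
    using assms(3) unfolding fin_gen_set_def by blast+
  have gens_closed: "DirProd_gens M A H \<subseteq> carrier (M \<times>\<times> H)"
    using A_closed assms(1,2) by (auto simp: DirProd_gens_def monoid.one_closed)
  have "(m, h) \<in> {word_eval (M \<times>\<times> H) w | w. w \<in> lists (DirProd_gens M A H)}"
    if "m \<in> carrier M" "h \<in> carrier H" for m h
  proof -
    from \<open>m \<in> carrier M\<close> obtain w where w: "w \<in> lists A" "m = word_eval M w"
      unfolding M_gen by blast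
    then have "set w \<subseteq> carrier M" using A_closed by auto
    then have "word_eval (M \<times>\<times> H) (DirProd_lift M H w h) = (m, h)"
      using w(2) \<open>h \<in> carrier H\<close> by (simp add: word_eval_DirProd_lift assms(1,2))
    then show ?thesis
      using DirProd_lift_in_gens[OF w(1) \<open>h \<in> carrier H\<close>]
      by (intro CollectI exI[of _ "DirProd_lift M H w h"]) simp
  qed
  then have generated:
    "carrier (M \<times>\<times> H) \<subseteq> {word_eval (M \<times>\<times> H) w | w. w \<in> lists (DirProd_gens M A H)}"
    by auto
  have "word_eval (M \<times>\<times> H) w \<in> carrier (M \<times>\<times> H)"
    if "w \<in> lists (DirProd_gens M A H)" for w
    using that gens_closed by (intro P.word_eval_closed) auto
  then have closed:
    "{word_eval (M \<times>\<times> H) w | w. w \<in> lists (DirProd_gens M A H)} \<subseteq> carrier (M \<times>\<times> H)"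
    by blast
  have "finite (DirProd_gens M A H)"
    using \<open>finite A\<close> assms(4) by (simp add: DirProd_gens_def)
  then show ?thesis
    unfolding fin_gen_set_def using gens_closed generated closed by (intro conjI subset_antisym)
qed

lemma word_dist_fst_le_word_dist_DirProd:
  assumes "monoid M" "A \<subseteq> carrier M"
  shows "word_dist M A (fst p) (fst q) \<le> word_dist (M \<times>\<times> H) (DirProd_gens M A H) p q"
proof -
  interpret M: monoid M by fact
  have "word_dist M A (fst p) (fst q) \<le> word_dist (M \<times>\<times> H) (DirProd_gens M A H) p q + ereal 0"
  proof (rule le_word_dist_plusI)
    fix w assume w: "w \<in> lists (DirProd_gens M A H)" "p \<otimes>\<^bsub>M \<times>\<times> H\<^esub> word_eval (M \<times>\<times> H) w = q"
    have letters: "set (map fst w) \<subseteq> A \<union> {\<one>\<^bsub>M\<^esub>}"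
      using w(1) by (auto simp: DirProd_gens_def)
    then have "set (map fst w) \<subseteq> carrier M" using assms(2) by blast
    define v where "v = filter (\<lambda>a. a \<noteq> \<one>\<^bsub>M\<^esub>) (map fst w)"
    have "v \<in> lists A" using letters by (force simp: v_def)
    moreover have "fst p \<otimes>\<^bsub>M\<^esub> word_eval M v = fst q"
      using w(2) \<open>set (map fst w) \<subseteq> carrier M\<close>
      by (auto simp: v_def M.word_eval_filter_neq_one word_eval_DirProd mult_DirProd')
    ultimately have "word_dist M A (fst p) (fst q) \<le> ereal (real (length v))"
      by (rule word_dist_le_length)
    also have "\<dots> \<le> ereal (real (length w))"
      by (simp add: v_def order_trans[OF length_filter_le])
    finally show "word_dist M A (fst p) (fst q) \<le> ereal (real (length w)) + ereal 0"
      by simp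
  qed
  then show ?thesis by simp
qed

lemma word_dist_DirProd_le_word_dist_fst:
  assumes "monoid M" "group H" "A \<subseteq> carrier M"
    and "p \<in> carrier (M \<times>\<times> H)" "q \<in> carrier (M \<times>\<times> H)"
  shows "word_dist (M \<times>\<times> H) (DirProd_gens M A H) p q \<le> word_dist M A (fst p) (fst q) + ereal 1"
proof (rule le_word_dist_plusI)
  interpret H: group H by fact
  fix w assume w: "w \<in> lists A" "fst p \<otimes>\<^bsub>M\<^esub> word_eval M w = fst q"
  define h where "h = inv\<^bsub>H\<^esub> snd p \<otimes>\<^bsub>H\<^esub> snd q"
  have h: "h \<in> carrier H" "snd p \<otimes>\<^bsub>H\<^esub> h = snd q"
    using assms(4,5) by (auto simp: h_def H.m_assoc[symmetric])
  have "set w \<subseteq> carrier M" using w(1) assms(3) by auto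
  then have "p \<otimes>\<^bsub>M \<times>\<times> H\<^esub> word_eval (M \<times>\<times> H) (DirProd_lift M H w h) = q"
    using w(2) h
    by (simp add: word_eval_DirProd_lift assms(1) group.is_monoid[OF assms(2)] mult_DirProd')
  then have "word_dist (M \<times>\<times> H) (DirProd_gens M A H) p q
      \<le> ereal (real (length (DirProd_lift M H w h)))"
    by (rule word_dist_le_length[OF DirProd_lift_in_gens[OF w(1) h(1)]])
  then show "word_dist (M \<times>\<times> H) (DirProd_gens M A H) p q \<le> ereal (real (length w)) + ereal 1"
    by (simp add: DirProd_lift_def add.commute)
qed

lemma quasi_isometry_fst_DirProd:
  assumes "monoid M" "group H" "A \<subseteq> carrier M"
  shows "quasi_isometry (M \<times>\<times> H) (DirProd_gens M A H) M A fst"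
proof (rule quasi_isometry_if_onto_and_distance_bounds[where c = 1])
  show "monoid M" by fact
  interpret H: group H by fact
  show "fst ` carrier (M \<times>\<times> H) = carrier M"
    using H.one_closed by (auto simp: fst_image_times)
  show "word_dist M A (fst p) (fst q) \<le> word_dist (M \<times>\<times> H) (DirProd_gens M A H) p q" for p q
    using assms(1,3) by (rule word_dist_fst_le_word_dist_DirProd)
  show "word_dist (M \<times>\<times> H) (DirProd_gens M A H) p q \<le> word_dist M A (fst p) (fst q) + ereal 1"
    if "p \<in> carrier (M \<times>\<times> H)" "q \<in> carrier (M \<times>\<times> H)" for p q
    using assms that by (rule word_dist_DirProd_le_word_dist_fst)
qed simp

theorem corollary8p4:
  fixes M :: "('a, 'm) monoid_scheme" and G :: "('b, 'n) monoid_scheme"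
  assumes "fin_gen_monoid M"
    and "group G" and "finite (carrier G)"
  shows "quasi_isometric (M \<times>\<times> G) M"
proof -
  obtain A where "monoid M" and A: "fin_gen_set M A"
    using assms(1) by (auto simp: fin_gen_monoid_def)
  have "monoid G" using assms(2) by (rule group.is_monoid)
  have "A \<subseteq> carrier M" using A unfolding fin_gen_set_def by blast
  show ?thesis
    unfolding quasi_isometric_def
  proof (intro exI conjI)
    show "fin_gen_set (M \<times>\<times> G) (DirProd_gens M A G)"
      using \<open>monoid M\<close> \<open>monoid G\<close> A assms(3) by (rule fin_gen_set_DirProd)
    show "quasi_isometry (M \<times>\<times> G) (DirProd_gens M A G) M A fst"
      using \<open>monoid M\<close> assms(2) \<open>A \<subseteq> carrier M\<close> by (rule quasi_isometry_fst_DirProd)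
  qed (fact A)
qed

end
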